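(* Let $\mathfrak a$ be a finite-dimensional real vector space, $\mathcal R$ a lattice in $\mathfrak a$, and $E$ a finite subset of $\widehat{\mathcal R}=\widehat{\mathfrak a}/\mathcal R^\vee$. For each $\nu\in E$ let $p_\nu$ be a polynomial function on $\mathfrak a$, and for $T\in\mathcal R$ put $$\phi(T)=\sum_{\nu\in E}p_\nu(T)e^{\langle\nu,T\rangle}.$$ Let $C$ be a non-empty open cone in $\mathfrak a$ and $T_\star\in\mathcal R$. If $\phi(T)\to 0$ as $\|T\|\to\infty$ with $T\in T_\star+(C\cap\mathcal R)$, then $p_\nu=0$ for every $\nu\in E$.
   Context: $\widehat{\mathfrak a}=i\mathfrak a^*$ (identified with the Pontryagin dual of $\mathfrak a$ via the exponential), $\mathcal R^\vee=\{\Lambda\in i\mathfrak a^*:\langle\Lambda,X\rangle\in 2\pi i\mathbb Z \text{ for all } X\in\mathcal R\}$, so that $\widehat{\mathcal R}=i\mathfrak a^*/\mathcal R^\vee$ is the Pontryagin dual of $\mathcal R$; for $\nu\in\widehat{\mathcal R}$ and $T\in\mathcal R$ the number $e^{\langle\nu,T\rangle}$ is well defined. $\|\cdot\|$ is any norm on $\mathfrak a$. *)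

theory Defs
  imports "HOL-Analysis.Analysis"
begin

definition lattice :: "'a::euclidean_space set \<Rightarrow> bool" where
  "lattice L \<longleftrightarrow> (\<exists>B. independent B \<and> span B = UNIV \<and>
      L = {(\<Sum>b\<in>B. of_int (k b) *\<^sub>R b) | k. True})"

text \<open>Elements of i a^* are written i*lam with lam a real linear functional on a.
  Two such functionals define the same element of the dual of the lattice L
  iff they differ by an element of the dual lattice, i.e. lam T - lam' T lies in 2 pi Z
  for all T in L.\<close>
definition same_char :: "'a::euclidean_space set \<Rightarrow> ('a \<Rightarrow> real) \<Rightarrow> ('a \<Rightarrow> real) \<Rightarrow> bool" where
  "same_char L lam lam' \<longleftrightarrow> (\<forall>T\<in>L. \<exists>k::int. lam T - lam' T = 2 * pi * of_int k)"

text \<open>e^{<nu,T>} for nu = i*lam.\<close>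
definition char_val :: "('a::euclidean_space \<Rightarrow> real) \<Rightarrow> 'a \<Rightarrow> complex" where
  "char_val lam T = cis (lam T)"

end

(*
  Inside the open cone C pick an additively closed set P of lattice points that
  contains a point w together with w + b for every vector b of a lattice basis (lattice points
  near a large multiple of the centre of a ball in C).  Along a ray a + n v in Tstar + P the sum
  phi is an exponential polynomial sum_z q_z(n) z^n with |z| = 1, and such a sequence tends to 0
  only if every q_z vanishes; so the partial sums of phi over the classes
  {nu. e^<nu,v> = z} vanish identically on Tstar + P.  Distinct characters in E differ at some
  point of P (otherwise they would agree on the lattice), so repeatedly splitting E into such
  classes isolates every single term p_nu e^<nu,.>.  Hence each p_nu vanishes on Tstar + P,
  which spans the space, and therefore everywhere.
*)
theory Submission
  imports Defs "HOL-Library.Real_Mod"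
begin

section \<open>Exponential polynomials on the naturals\<close>

lemma unimodular_power_sum_tendsto_zero_imp_zero:
  fixes W :: "complex set" and d :: "complex \<Rightarrow> complex"
  assumes "finite W" "\<forall>w\<in>W. norm w = 1"
    and "(\<lambda>n. \<Sum>w\<in>W. d w * w ^ n) \<longlonglongrightarrow> 0"
  shows "\<forall>w\<in>W. d w = 0"
  using assms
proof (induction W arbitrary: d rule: finite_induct)
  case empty
  then show ?case by simp
next
  case (insert u W)
  define a where "a = (\<lambda>n. \<Sum>w\<in>insert u W. d w * w ^ n)"
  have a0: "a \<longlonglongrightarrow> 0"
    using insert.prems(2) by (simp add: a_def)
  have "(\<lambda>n. a (Suc n) - u * a n) \<longlonglongrightarrow> 0 - u * 0"
    by (intro tendsto_diff tendsto_mult tendsto_const a0 LIMSEQ_Suc)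
  moreover have "a (Suc n) - u * a n = (\<Sum>w\<in>W. (d w * (w - u)) * w ^ n)" for n
    using insert.hyps by (simp add: a_def sum_distrib_left algebra_simps sum_subtractf[symmetric])
  ultimately have "\<forall>w\<in>W. d w * (w - u) = 0"
    using insert.IH[of "\<lambda>w. d w * (w - u)"] insert.prems(1) by simp
  with insert.hyps have dW: "\<forall>w\<in>W. d w = 0"
    by auto
  then have "norm (a n) = norm (d u)" for n
    using insert.hyps insert.prems(1) by (simp add: a_def norm_mult norm_power)
  then have "d u = 0"
    using tendsto_norm_zero[OF a0] by (simp add: LIMSEQ_const_iff)
  with dW show ?case by simp
qed

lemma inverse_power_times_unimodular_tendsto_zero:
  fixes w :: complex
  assumes "norm w = 1" "k > 0"
  shows "(\<lambda>n. inverse (of_nat n) ^ k * w ^ n) \<longlonglongrightarrow> 0"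
proof -
  have "(\<lambda>n. inverse (of_nat n :: complex) ^ k) \<longlonglongrightarrow> 0"
    using tendsto_power[OF lim_inverse_n[where 'a=complex], of k] assms(2) by (simp add: zero_power)
  moreover have "(\<lambda>n. norm (inverse (of_nat n) ^ k * w ^ n)) = (\<lambda>n. norm (inverse (of_nat n :: complex) ^ k))"
    using assms(1) by (simp add: norm_mult norm_power)
  ultimately have "(\<lambda>n. norm (inverse (of_nat n) ^ k * w ^ n)) \<longlonglongrightarrow> 0"
    using tendsto_norm_zero by fastforce
  then show ?thesis
    by (rule tendsto_norm_zero_cancel)
qed

lemma exp_poly_tendsto_zero_imp_coeffs_zero:
  fixes W :: "complex set" and c :: "complex \<Rightarrow> nat \<Rightarrow> complex"
  assumes W: "finite W" "\<forall>w\<in>W. norm w = 1"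
    and "(\<lambda>n. \<Sum>w\<in>W. (\<Sum>i\<le>N. c w i * of_nat n ^ i) * w ^ n) \<longlonglongrightarrow> 0"
  shows "\<forall>w\<in>W. \<forall>i\<le>N. c w i = 0"
  using assms(3)
proof (induction N arbitrary: c)
  case 0
  then show ?case
    using unimodular_power_sum_tendsto_zero_imp_zero[OF W, of "\<lambda>w. c w 0"] by simp
next
  case (Suc N)
  define a where "a = (\<lambda>n. \<Sum>w\<in>W. (\<Sum>i\<le>Suc N. c w i * of_nat n ^ i) * w ^ n)"
  \<comment> \<open>Dividing by n^(N+1) leaves the top coefficients plus the null sequence r.\<close>
  define r where "r = (\<lambda>n. \<Sum>w\<in>W. \<Sum>i\<le>N. c w i * (inverse (of_nat n) ^ (Suc N - i) * w ^ n))"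
  have "(\<lambda>n. a n * inverse (of_nat n) ^ Suc N - r n) \<longlonglongrightarrow> 0 * 0 ^ Suc N - 0"
    unfolding r_def using Suc.prems W(2)
    by (intro tendsto_diff tendsto_mult tendsto_power lim_inverse_n tendsto_null_sum
        tendsto_mult_right_zero inverse_power_times_unimodular_tendsto_zero) (auto simp: a_def)
  then have "(\<lambda>n. a n * inverse (of_nat n) ^ Suc N - r n) \<longlonglongrightarrow> 0"
    by simp
  moreover have "\<forall>\<^sub>F n in sequentially. a n * inverse (of_nat n) ^ Suc N - r n = (\<Sum>w\<in>W. c w (Suc N) * w ^ n)"
  proof (rule eventually_sequentiallyI[of 1])
    fix n :: nat
    assume "1 \<le> n"
    have "of_nat n ^ i * inverse (of_nat n) ^ Suc N = (inverse (of_nat n) ^ (Suc N - i) :: complex)"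
      if "i \<le> Suc N" for i
    proof -
      have "of_nat n ^ i * inverse (of_nat n :: complex) ^ Suc N
          = (of_nat n * inverse (of_nat n)) ^ i * inverse (of_nat n) ^ (Suc N - i)"
        using that by (simp add: power_mult_distrib mult.assoc flip: power_add)
      also have "\<dots> = inverse (of_nat n) ^ (Suc N - i)"
        using \<open>1 \<le> n\<close> by simp
      finally show ?thesis .
    qed
    then have "a n * inverse (of_nat n) ^ Suc N
        = (\<Sum>w\<in>W. \<Sum>i\<le>Suc N. c w i * (inverse (of_nat n) ^ (Suc N - i) * w ^ n))"
      unfolding a_def sum_distrib_right by (intro sum.cong refl) (simp add: mult_ac)
    then show "a n * inverse (of_nat n) ^ Suc N - r n = (\<Sum>w\<in>W. c w (Suc N) * w ^ n)"
      by (simp add: r_def sum.distrib)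
  qed
  ultimately have "(\<lambda>n. \<Sum>w\<in>W. c w (Suc N) * w ^ n) \<longlonglongrightarrow> 0"
    by (rule Lim_transform_eventually)
  then have top: "\<forall>w\<in>W. c w (Suc N) = 0"
    by (rule unimodular_power_sum_tendsto_zero_imp_zero[OF W])
  then have a_eq: "a = (\<lambda>n. \<Sum>w\<in>W. (\<Sum>i\<le>N. c w i * of_nat n ^ i) * w ^ n)"
    unfolding a_def by (intro ext sum.cong refl) simp
  have "(\<lambda>n. \<Sum>w\<in>W. (\<Sum>i\<le>N. c w i * of_nat n ^ i) * w ^ n) \<longlonglongrightarrow> 0"
    using Suc.prems by (simp only: a_def[symmetric] a_eq)
  then have "\<forall>w\<in>W. \<forall>i\<le>N. c w i = 0"
    by (rule Suc.IH)
  with top show ?case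
    by (auto simp: le_Suc_eq)
qed

lemma exp_poly_tendsto_zero_imp_class_coeffs_zero:
  fixes S :: "'i set" and h :: "'i \<Rightarrow> complex" and c :: "'i \<Rightarrow> nat \<Rightarrow> complex"
  assumes S: "finite S" "\<forall>s\<in>S. norm (h s) = 1"
    and lim: "(\<lambda>n. \<Sum>s\<in>S. (\<Sum>i\<le>N. c s i * of_nat n ^ i) * h s ^ n) \<longlonglongrightarrow> 0"
    and "i \<le> N"
  shows "(\<Sum>s\<in>{s\<in>S. h s = w}. c s i) = 0"
proof -
  define C where "C w i = (\<Sum>s\<in>{s\<in>S. h s = w}. c s i)" for w i
  have "(\<Sum>s\<in>S. (\<Sum>i\<le>N. c s i * of_nat n ^ i) * h s ^ n)
      = (\<Sum>w\<in>h ` S. (\<Sum>i\<le>N. C w i * of_nat n ^ i) * w ^ n)" for n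
  proof -
    have "(\<Sum>s\<in>S. (\<Sum>i\<le>N. c s i * of_nat n ^ i) * h s ^ n)
        = (\<Sum>w\<in>h ` S. \<Sum>s\<in>{s\<in>S. h s = w}. (\<Sum>i\<le>N. c s i * of_nat n ^ i) * w ^ n)"
      by (subst sum.image_gen[OF S(1), of _ h]) (intro sum.cong refl, auto)
    also have "\<dots> = (\<Sum>w\<in>h ` S. (\<Sum>i\<le>N. C w i * of_nat n ^ i) * w ^ n)"
      unfolding C_def sum_distrib_right by (intro sum.cong refl) (rule sum.swap)
    finally show ?thesis .
  qed
  with lim have "\<forall>w\<in>h ` S. \<forall>i\<le>N. C w i = 0"
    by (intro exp_poly_tendsto_zero_imp_coeffs_zero) (use S in auto)
  moreover have "C w i = 0" if "w \<notin> h ` S"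
    using that by (auto simp: C_def intro: sum.neutral)
  ultimately show ?thesis
    using \<open>i \<le> N\<close> by (auto simp: C_def)
qed

section \<open>Polynomial functions along lines\<close>

lemma real_polynomial_function_expansion:
  assumes "real_polynomial_function g"
  obtains a n where "\<And>N t. n \<le> N \<Longrightarrow> g t = (\<Sum>i\<le>N. a i * t ^ i)"
proof -
  obtain a n where g: "g = (\<lambda>t. \<Sum>i\<le>n. a i * t ^ i)"
    using assms real_polynomial_function_iff_sum by blast
  show ?thesis
  proof (rule that)
    fix N t
    assume "n \<le> N"
    then show "g t = (\<Sum>i\<le>N. (if i \<le> n then a i else 0) * t ^ i)"
      unfolding g by (intro sum.mono_neutral_cong_left) auto
  qed
qed

lemma polynomial_function_along_line:
  fixes f :: "'a::real_normed_vector \<Rightarrow> complex"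
  assumes "polynomial_function f"
  obtains c n where "\<And>N t. n \<le> N \<Longrightarrow> f (x + t *\<^sub>R v) = (\<Sum>i\<le>N. c i * of_real t ^ i)"
proof -
  define g where "g = (\<lambda>t. f (x + t *\<^sub>R v))"
  have "polynomial_function (\<lambda>t::real. x + t *\<^sub>R v)"
    by (intro polynomial_function_add polynomial_function_const polynomial_function_bounded_linear
        bounded_linear_scaleR_left)
  then have "polynomial_function g"
    using polynomial_function_compose[OF _ assms] by (simp add: g_def o_def)
  then have re: "real_polynomial_function (\<lambda>t. Re (g t))"
    and im: "real_polynomial_function (\<lambda>t. Im (g t))"
    using bounded_linear_Re bounded_linear_Im unfolding polynomial_function_def o_def by blast+
  obtain a1 n1 where a1: "\<And>N t. n1 \<le> N \<Longrightarrow> Re (g t) = (\<Sum>i\<le>N. a1 i * t ^ i)"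
    by (rule real_polynomial_function_expansion[OF re]) blast
  obtain a2 n2 where a2: "\<And>N t. n2 \<le> N \<Longrightarrow> Im (g t) = (\<Sum>i\<le>N. a2 i * t ^ i)"
    by (rule real_polynomial_function_expansion[OF im]) blast
  show ?thesis
  proof (rule that)
    fix N t
    assume "max n1 n2 \<le> N"
    then have "n1 \<le> N" "n2 \<le> N"
      by simp_all
    then have "g t = (\<Sum>i\<le>N. Complex (a1 i) (a2 i) * of_real t ^ i)"
      by (simp add: complex_eq_iff a1 a2 flip: of_real_power)
    then show "f (x + t *\<^sub>R v) = (\<Sum>i\<le>N. Complex (a1 i) (a2 i) * of_real t ^ i)"
      by (simp add: g_def)
  qed
qed

lemma polynomial_function_common_line_expansion:
  fixes p :: "'i \<Rightarrow> 'a::real_normed_vector \<Rightarrow> complex"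
  assumes "finite S" "\<forall>s\<in>S. polynomial_function (p s)"
  obtains c n where
    "\<And>s N t. s \<in> S \<Longrightarrow> n \<le> N \<Longrightarrow> p s (x + t *\<^sub>R v) = (\<Sum>i\<le>N. c s i * of_real t ^ i)"
proof -
  have "\<exists>c n. \<forall>s\<in>S. \<forall>N\<ge>n. \<forall>t. p s (x + t *\<^sub>R v) = (\<Sum>i\<le>N. c s i * of_real t ^ i)"
    using assms
  proof (induction S rule: finite_induct)
    case empty
    then show ?case by simp
  next
    case (insert s S)
    then obtain c n where c: "\<forall>s'\<in>S. \<forall>N\<ge>n. \<forall>t. p s' (x + t *\<^sub>R v) = (\<Sum>i\<le>N. c s' i * of_real t ^ i)"
      by auto
    obtain d m where d: "\<And>N t. m \<le> N \<Longrightarrow> p s (x + t *\<^sub>R v) = (\<Sum>i\<le>N. d i * of_real t ^ i)"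
      by (rule polynomial_function_along_line[of "p s"]) (use insert.prems in auto)
    show ?case
      by (intro exI[of _ "c(s := d)"] exI[of _ "max n m"]) (use c d insert.hyps(2) in auto)
  qed
  then show ?thesis
    using that by blast
qed

lemma polynomial_function_zero_on_line_if_zero_at_nat:
  fixes f :: "'a::real_normed_vector \<Rightarrow> complex"
  assumes "polynomial_function f" "\<And>n::nat. f (x + of_nat n *\<^sub>R v) = 0"
  shows "f (x + t *\<^sub>R v) = 0"
proof -
  obtain c N where c: "\<And>t. f (x + t *\<^sub>R v) = (\<Sum>i\<le>N. c i * of_real t ^ i)"
    using polynomial_function_along_line[OF assms(1)] by (metis order_refl)
  have "\<nat> \<subseteq> {z::complex. (\<Sum>i\<le>N. c i * z ^ i) = 0}"
    using assms(2) c[of "of_nat _"] by (auto elim!: Nats_cases)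
  then have "infinite {z::complex. (\<Sum>i\<le>N. c i * z ^ i) = 0}"
    using Nats_infinite finite_subset by blast
  then have "\<forall>i\<le>N. c i = 0"
    using polyfun_finite_roots by blast
  then show ?thesis
    by (simp add: c)
qed

lemma polynomial_function_zero_if_zero_on_nat_combinations:
  fixes f :: "'a::real_normed_vector \<Rightarrow> complex"
  assumes f: "polynomial_function f"
    and "finite V" "\<And>n. f (x + (\<Sum>v\<in>V. of_nat (n v) *\<^sub>R v)) = 0"
  shows "f (x + (\<Sum>v\<in>V. t v *\<^sub>R v)) = 0"
  using assms(2,3)
proof (induction V arbitrary: x rule: finite_induct)
  case empty
  then show ?case by simp
next
  case (insert u V)
  have "f ((x + t u *\<^sub>R u) + (\<Sum>v\<in>V. t v *\<^sub>R v)) = 0"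
  proof (rule insert.IH)
    fix n :: "'a \<Rightarrow> nat"
    have "f ((x + (\<Sum>v\<in>V. of_nat (n v) *\<^sub>R v)) + of_nat m *\<^sub>R u) = 0" for m
    proof -
      have "(\<Sum>v\<in>V. of_nat ((n(u := m)) v) *\<^sub>R v) = (\<Sum>v\<in>V. of_nat (n v) *\<^sub>R v)"
        using insert.hyps(2) by (intro sum.cong) auto
      then show ?thesis
        using insert.prems[of "n(u := m)"] insert.hyps by (simp add: algebra_simps)
    qed
    then have "f ((x + (\<Sum>v\<in>V. of_nat (n v) *\<^sub>R v)) + t u *\<^sub>R u) = 0"
      by (rule polynomial_function_zero_on_line_if_zero_at_nat[OF f])
    then show "f (x + t u *\<^sub>R u + (\<Sum>v\<in>V. of_nat (n v) *\<^sub>R v)) = 0"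
      by (simp add: algebra_simps)
  qed
  then show ?case
    using insert.hyps by (simp add: algebra_simps)
qed

section \<open>Characters and rays\<close>

lemma char_val_add: "linear lam \<Longrightarrow> char_val lam (x + y) = char_val lam x * char_val lam y"
  by (simp add: char_val_def linear_add cis_mult)

lemma char_val_scaleR_of_nat:
  assumes "linear lam"
  shows "char_val lam (of_nat n *\<^sub>R v) = char_val lam v ^ n"
proof -
  have "lam (of_nat n *\<^sub>R v) = real n * lam v"
    using linear_scale[OF assms] by simp
  then show ?thesis
    by (simp only: char_val_def Complex.DeMoivre)
qed

lemma norm_char_val [simp]: "norm (char_val lam x) = 1"
  by (simp add: char_val_def)

lemma char_val_zero [simp]: "linear lam \<Longrightarrow> char_val lam 0 = 1"
  by (simp add: char_val_def linear_0)

lemma exp_poly_class_sum_zero_if_tendsto_zero_along_ray: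
  fixes S :: "('a::euclidean_space \<Rightarrow> real) set" and p :: "('a \<Rightarrow> real) \<Rightarrow> 'a \<Rightarrow> complex"
  assumes S: "finite S" "\<forall>lam\<in>S. linear lam" "\<forall>lam\<in>S. polynomial_function (p lam)"
    and lim: "(\<lambda>n. \<Sum>lam\<in>S. p lam (x + of_nat n *\<^sub>R v) * char_val lam (x + of_nat n *\<^sub>R v)) \<longlonglongrightarrow> 0"
  shows "(\<Sum>lam\<in>{lam\<in>S. char_val lam v = z}. p lam x * char_val lam x) = 0"
proof -
  obtain c N where c: "\<And>lam t. lam \<in> S \<Longrightarrow> p lam (x + t *\<^sub>R v) = (\<Sum>i\<le>N. c lam i * of_real t ^ i)"
    using polynomial_function_common_line_expansion[OF S(1,3)] by (metis order_refl)
  have "p lam (x + of_nat n *\<^sub>R v) * char_val lam (x + of_nat n *\<^sub>R v)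
      = (\<Sum>i\<le>N. (c lam i * char_val lam x) * of_nat n ^ i) * char_val lam v ^ n"
    if "lam \<in> S" for lam n
  proof -
    have "char_val lam (x + of_nat n *\<^sub>R v) = char_val lam x * char_val lam v ^ n"
      using S(2) that by (simp add: char_val_add char_val_scaleR_of_nat)
    with c[OF that, of "of_nat n"] show ?thesis
      by (simp add: sum_distrib_left sum_distrib_right mult_ac)
  qed
  then have "(\<lambda>n. \<Sum>lam\<in>S. p lam (x + of_nat n *\<^sub>R v) * char_val lam (x + of_nat n *\<^sub>R v))
      = (\<lambda>n. \<Sum>lam\<in>S. (\<Sum>i\<le>N. (c lam i * char_val lam x) * of_nat n ^ i) * char_val lam v ^ n)"
    by (intro ext sum.cong refl)
  with lim have "(\<lambda>n. \<Sum>lam\<in>S. (\<Sum>i\<le>N. (c lam i * char_val lam x) * of_nat n ^ i) * char_val lam v ^ n)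
      \<longlonglongrightarrow> 0"
    by (simp only:)
  then have "(\<Sum>lam\<in>{lam\<in>S. char_val lam v = z}. c lam 0 * char_val lam x) = 0"
    using exp_poly_tendsto_zero_imp_class_coeffs_zero[OF S(1), where h="\<lambda>lam. char_val lam v"
        and c="\<lambda>lam i. c lam i * char_val lam x" and i=0 and w=z]
    by simp
  moreover have "c lam 0 = p lam x" if "lam \<in> S" for lam
    using c[OF that, of 0] by simp
  ultimately show ?thesis
    by (metis (no_types, lifting) mem_Collect_eq sum.cong)
qed

lemma tendsto_zero_along_ray:
  fixes g :: "'a::real_normed_vector \<Rightarrow> 'b::real_normed_vector"
  assumes g: "\<forall>\<epsilon>>0. \<exists>M. \<forall>T\<in>X. M \<le> norm T \<longrightarrow> norm (g T) < \<epsilon>"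
    and "v \<noteq> 0" "\<And>n. x + of_nat n *\<^sub>R v \<in> X"
  shows "(\<lambda>n. g (x + of_nat n *\<^sub>R v)) \<longlonglongrightarrow> 0"
  unfolding tendsto_iff
proof (intro allI impI)
  fix \<epsilon> :: real
  assume "\<epsilon> > 0"
  then obtain M where M: "\<And>T. T \<in> X \<Longrightarrow> M \<le> norm T \<Longrightarrow> norm (g T) < \<epsilon>"
    using g by blast
  have "LIM n sequentially. norm v * real n :> at_top"
    using assms(2) by (intro filterlim_tendsto_pos_mult_at_top[OF tendsto_const] filterlim_real_sequentially) simp
  then have "LIM n sequentially. - norm x + norm v * real n :> at_top"
    by (rule filterlim_tendsto_add_at_top[OF tendsto_const])
  then have "LIM n sequentially. norm (x + of_nat n *\<^sub>R v) :> at_top"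
  proof (rule filterlim_at_top_mono, intro always_eventually allI)
    fix n :: nat
    show "- norm x + norm v * real n \<le> norm (x + of_nat n *\<^sub>R v)"
      using norm_diff_ineq[of "of_nat n *\<^sub>R v" x] by (simp add: add.commute mult.commute)
  qed
  then have "\<forall>\<^sub>F n in sequentially. M \<le> norm (x + of_nat n *\<^sub>R v)"
    by (simp add: filterlim_at_top)
  then show "\<forall>\<^sub>F n in sequentially. dist (g (x + of_nat n *\<^sub>R v)) 0 < \<epsilon>"
    by eventually_elim (use M assms(3) in simp)
qed

section \<open>Lattice points in open cones\<close>

definition int_span :: "'a::real_vector set \<Rightarrow> 'a set" where
  "int_span B = {(\<Sum>b\<in>B. of_int (k b) *\<^sub>R b) | k. True}"

lemma lattice_iff_int_span:
  "lattice R \<longleftrightarrow> (\<exists>B. independent B \<and> span B = UNIV \<and> R = int_span B)"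
  by (simp add: lattice_def int_span_def)

lemma int_span_add:
  assumes "x \<in> int_span B" "y \<in> int_span B"
  shows "x + y \<in> int_span B"
proof -
  obtain k l where "x = (\<Sum>b\<in>B. of_int (k b) *\<^sub>R b)" "y = (\<Sum>b\<in>B. of_int (l b) *\<^sub>R b)"
    using assms by (auto simp: int_span_def)
  then have "x + y = (\<Sum>b\<in>B. of_int (k b + l b) *\<^sub>R b)"
    by (simp add: sum.distrib scaleR_add_left)
  then show ?thesis
    unfolding int_span_def by (intro CollectI exI[of _ "\<lambda>b. k b + l b"]) simp
qed

lemma int_span_superset:
  assumes "finite B" "b \<in> B"
  shows "b \<in> int_span B"
proof -
  have "(\<Sum>b'\<in>B. of_int (if b' = b then 1 else 0) *\<^sub>R b') = (\<Sum>b'\<in>B. if b' = b then b' else 0)"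
    by (intro sum.cong) auto
  also have "\<dots> = b"
    using assms by simp
  finally show ?thesis
    unfolding int_span_def by (intro CollectI exI[of _ "\<lambda>b'. if b' = b then 1 else 0"]) simp
qed

lemma int_span_rounding:
  assumes "finite B" "y \<in> span B"
  obtains w where "w \<in> int_span B" "dist y w \<le> (\<Sum>b\<in>B. norm b)"
proof -
  obtain u where u: "y = (\<Sum>b\<in>B. u b *\<^sub>R b)"
    using assms(2) span_finite[OF assms(1)] by auto
  define w where "w = (\<Sum>b\<in>B. of_int \<lfloor>u b\<rfloor> *\<^sub>R b)"
  have w: "w \<in> int_span B"
    unfolding int_span_def w_def by (intro CollectI exI[of _ "\<lambda>b. \<lfloor>u b\<rfloor>"]) simp
  have "dist y w = norm (\<Sum>b\<in>B. (u b - of_int \<lfloor>u b\<rfloor>) *\<^sub>R b)"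
    by (simp add: dist_norm u w_def sum_subtractf[symmetric] scaleR_diff_left)
  also have "\<dots> \<le> (\<Sum>b\<in>B. norm ((u b - of_int \<lfloor>u b\<rfloor>) *\<^sub>R b))"
    by (rule norm_sum)
  also have "\<dots> \<le> (\<Sum>b\<in>B. norm b)"
  proof (rule sum_mono)
    fix b
    have "\<bar>u b - of_int \<lfloor>u b\<rfloor>\<bar> \<le> 1"
      by linarith
    then show "norm ((u b - of_int \<lfloor>u b\<rfloor>) *\<^sub>R b) \<le> norm b"
      by (simp add: mult_left_le_one_le)
  qed
  finally show ?thesis
    by (rule that[OF w])
qed

lemma same_char_int_span:
  assumes "linear lam" "linear lam'" "\<And>b. b \<in> B \<Longrightarrow> char_val lam b = char_val lam' b"
  shows "same_char (int_span B) lam lam'"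
  unfolding same_char_def
proof
  fix T
  assume "T \<in> int_span B"
  then obtain k where T: "T = (\<Sum>b\<in>B. of_int (k b) *\<^sub>R b)"
    by (auto simp: int_span_def)
  have "\<exists>m::int. lam b - lam' b = of_int m * (2 * pi)" if "b \<in> B" for b
  proof -
    have "cis (lam b - lam' b) = 1"
      using assms(3)[OF that] by (simp add: char_val_def flip: cis_divide)
    then show ?thesis
      by (simp add: cis_eq_1_iff)
  qed
  then obtain m where m: "\<And>b. b \<in> B \<Longrightarrow> lam b - lam' b = of_int (m b) * (2 * pi)"
    by metis
  have "lam T - lam' T = (\<Sum>b\<in>B. of_int (k b) * (lam b - lam' b))"
    unfolding T using assms(1,2)
    by (simp add: linear_sum linear_scale sum_subtractf[symmetric] algebra_simps)
  also have "\<dots> = 2 * pi * of_int (\<Sum>b\<in>B. k b * m b)"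
    by (simp add: m sum_distrib_left mult_ac)
  finally show "\<exists>k::int. lam T - lam' T = 2 * pi * of_int k"
    by blast
qed

lemma cone_contains_scaled_ball:
  fixes x0 :: "'a::real_normed_vector"
  assumes "ball x0 r \<subseteq> C" "\<forall>x\<in>C. \<forall>t>0. t *\<^sub>R x \<in> C" "s > 0"
  shows "ball (s *\<^sub>R x0) (s * r) \<subseteq> C"
proof
  fix z
  assume "z \<in> ball (s *\<^sub>R x0) (s * r)"
  have "x0 - inverse s *\<^sub>R z = inverse s *\<^sub>R (s *\<^sub>R x0 - z)"
    using assms(3) by (simp add: algebra_simps)
  then have "dist x0 (inverse s *\<^sub>R z) = inverse s * dist (s *\<^sub>R x0) z"
    using assms(3) by (simp add: dist_norm)
  also have "\<dots> < r"
    using assms(3) \<open>z \<in> ball (s *\<^sub>R x0) (s * r)\<close> by (simp add: field_simps)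
  finally have "inverse s *\<^sub>R z \<in> C"
    using assms(1) by auto
  then have "s *\<^sub>R (inverse s *\<^sub>R z) \<in> C"
    using assms(2,3) by blast
  then show "z \<in> C"
    using assms(3) by simp
qed

lemma add_mem_ball_add:
  fixes x y :: "'a::real_normed_vector"
  assumes "a \<in> ball x e" "b \<in> ball y d"
  shows "a + b \<in> ball (x + y) (e + d)"
  using assms dist_triangle_add[of x y a b] by simp

lemma int_span_semigroup_in_open_cone:
  fixes C :: "'a::euclidean_space set"
  assumes C: "open C" "C \<noteq> {}" "\<forall>x\<in>C. \<forall>t>0. t *\<^sub>R x \<in> C"
    and B: "finite B" "span B = UNIV"
  obtains P w where "P \<subseteq> C \<inter> int_span B" "\<And>a v. a \<in> P \<Longrightarrow> v \<in> P \<Longrightarrow> a + v \<in> P"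
    "w \<in> P" "\<And>b. b \<in> B \<Longrightarrow> w + b \<in> P"
proof -
  obtain x0 r where r: "r > 0" "ball x0 r \<subseteq> C"
    using C(1,2) open_contains_ball by blast
  define P where "P = {z \<in> int_span B. \<exists>s>0. z \<in> ball (s *\<^sub>R x0) (s * r)}"
  have "P \<subseteq> C"
  proof
    fix z
    assume "z \<in> P"
    then obtain s where "s > 0" "z \<in> ball (s *\<^sub>R x0) (s * r)"
      unfolding P_def by blast
    then show "z \<in> C"
      using cone_contains_scaled_ball[OF r(2) C(3)] by blast
  qed
  then have "P \<subseteq> C \<inter> int_span B"
    by (auto simp: P_def)
  moreover have "a + v \<in> P" if aP: "a \<in> P" and vP: "v \<in> P" for a v
  proof -
    obtain s t where "s > 0" "t > 0"
      and ball: "a \<in> ball (s *\<^sub>R x0) (s * r)" "v \<in> ball (t *\<^sub>R x0) (t * r)"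
      using aP vP unfolding P_def by blast
    have "a + v \<in> ball ((s + t) *\<^sub>R x0) ((s + t) * r)"
      unfolding scaleR_add_left distrib_right using ball by (rule add_mem_ball_add)
    with \<open>s > 0\<close> \<open>t > 0\<close> aP vP show ?thesis
      by (auto simp: P_def int_span_add intro: exI[of _ "s + t"])
  qed
  moreover
  \<comment> \<open>Round s x0 to a lattice point w; s is so large that w and all w + b stay in the cone.\<close>
  define M where "M = (\<Sum>b\<in>B. norm b)"
  define s where "s = (2 * M + 1) / r"
  have "M \<ge> 0"
    by (simp add: M_def sum_nonneg)
  then have s: "s > 0" "s * r = 2 * M + 1"
    using r(1) by (simp_all add: s_def)
  obtain w where w: "w \<in> int_span B" "dist (s *\<^sub>R x0) w \<le> M"
    using int_span_rounding[OF B(1)] B(2) M_def by blast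
  have "w \<in> P"
    using w s \<open>M \<ge> 0\<close> by (auto simp: P_def)
  moreover have "w + b \<in> P" if "b \<in> B" for b
  proof -
    have "norm b \<le> M"
      unfolding M_def using B(1) that by (intro member_le_sum) auto
    then have "dist (s *\<^sub>R x0) (w + b) < s * r"
      using w(2) s(2) dist_triangle[of "s *\<^sub>R x0" "w + b" w] \<open>M \<ge> 0\<close> by (simp add: dist_norm)
    moreover have "w + b \<in> int_span B"
      using w(1) int_span_add int_span_superset[OF B(1) that] by blast
    ultimately show ?thesis
      using s(1) by (auto simp: P_def)
  qed
  ultimately show ?thesis
    by (rule that)
qed

section \<open>Vanishing on an additive semigroup\<close>

lemma add_of_nat_scaleR_mem:
  fixes P :: "'a::real_vector set"
  assumes "\<And>a v. a \<in> P \<Longrightarrow> v \<in> P \<Longrightarrow> a + v \<in> P" "a \<in> P" "v \<in> P"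
  shows "a + of_nat n *\<^sub>R v \<in> P"
proof (induction n)
  case 0
  then show ?case using assms(2) by simp
next
  case (Suc n)
  have "a + of_nat (Suc n) *\<^sub>R v = (a + of_nat n *\<^sub>R v) + v"
    by (simp add: algebra_simps)
  then show ?case
    using assms(1)[OF Suc.IH assms(3)] by (simp only:)
qed

lemma add_nat_combination_mem:
  fixes P :: "'a::real_vector set"
  assumes "\<And>a v. a \<in> P \<Longrightarrow> v \<in> P \<Longrightarrow> a + v \<in> P" "finite V" "V \<subseteq> P" "x \<in> P"
  shows "x + (\<Sum>v\<in>V. of_nat (n v) *\<^sub>R v) \<in> P"
  using assms(2-)
proof (induction V rule: finite_induct)
  case empty
  then show ?case by simp
next
  case (insert u V)
  then have "(x + (\<Sum>v\<in>V. of_nat (n v) *\<^sub>R v)) + of_nat (n u) *\<^sub>R u \<in> P"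
    by (intro add_of_nat_scaleR_mem[OF assms(1)]) auto
  then show ?case
    using insert.hyps by (simp add: algebra_simps)
qed

lemma polynomial_function_zero_if_zero_on_translated_semigroup:
  fixes f :: "'a::euclidean_space \<Rightarrow> complex"
  assumes "polynomial_function f"
    and P: "\<And>a v. a \<in> P \<Longrightarrow> v \<in> P \<Longrightarrow> a + v \<in> P" "w \<in> P" "span P = UNIV"
    and zero: "\<And>a. a \<in> P \<Longrightarrow> f (x + a) = 0"
  shows "f y = 0"
proof -
  obtain V where V: "V \<subseteq> P" "independent V" "P \<subseteq> span V"
    by (rule maximal_independent_subset)
  have "finite V"
    using V(2) by (rule finiteI_independent)
  have "span V = UNIV"
    using P(3) V(3) span_mono[of P "span V"] by (auto simp: span_span)
  then have "y - (x + w) \<in> range (\<lambda>t. \<Sum>v\<in>V. t v *\<^sub>R v)"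
    unfolding span_finite[OF \<open>finite V\<close>, symmetric] by simp
  then obtain t where t: "y - (x + w) = (\<Sum>v\<in>V. t v *\<^sub>R v)"
    by blast
  have "f ((x + w) + (\<Sum>v\<in>V. t v *\<^sub>R v)) = 0"
  proof (rule polynomial_function_zero_if_zero_on_nat_combinations[OF assms(1) \<open>finite V\<close>])
    fix n :: "'a \<Rightarrow> nat"
    show "f ((x + w) + (\<Sum>v\<in>V. of_nat (n v) *\<^sub>R v)) = 0"
      using zero add_nat_combination_mem[OF P(1) \<open>finite V\<close> V(1) P(2)] by (simp add: add.assoc)
  qed
  then show ?thesis
    by (simp flip: t)
qed

lemma span_eq_UNIV_if_translates_mem:
  assumes "span B = UNIV" "w \<in> P" "\<And>b. b \<in> B \<Longrightarrow> w + b \<in> P"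
  shows "span P = UNIV"
proof -
  have "b \<in> span P" if "b \<in> B" for b
    using span_diff[OF span_base[OF assms(3)[OF that]] span_base[OF assms(2)]] by simp
  then show ?thesis
    using assms(1) span_mono[of B "span P"] by (auto simp: span_span)
qed

lemma exists_nonzero_if_span_eq_UNIV:
  fixes P :: "'a::euclidean_space set"
  assumes "span P = UNIV"
  obtains v where "v \<in> P" "v \<noteq> 0"
proof -
  obtain b :: 'a where "b \<in> Basis"
    using nonempty_Basis by blast
  then have "b \<noteq> 0"
    by (rule nonzero_Basis)
  moreover have "\<not> P \<subseteq> {0}"
  proof
    assume "P \<subseteq> {0}"
    then have "span P \<subseteq> {0}"
      using span_mono[of P "{0}"] by simp
    with assms \<open>b \<noteq> 0\<close> show False
      by auto
  qed
  ultimately show ?thesis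
    using that by blast
qed

lemma exists_char_val_neq_if_not_same_char:
  assumes "linear lam" "linear lam'" "\<not> same_char (int_span B) lam lam'"
    and "w \<in> P" "\<And>b. b \<in> B \<Longrightarrow> w + b \<in> P"
  shows "\<exists>v\<in>P. char_val lam v \<noteq> char_val lam' v"
proof (rule ccontr)
  assume "\<not> ?thesis"
  then have eq: "char_val lam v = char_val lam' v" if "v \<in> P" for v
    using that by blast
  have "char_val lam b = char_val lam' b" if "b \<in> B" for b
  proof -
    have "char_val lam w * char_val lam b = char_val lam' w * char_val lam' b"
      using eq[OF assms(5)[OF that]] assms(1,2) by (simp add: char_val_add)
    moreover have "char_val lam w = char_val lam' w" "char_val lam w \<noteq> 0"
      using eq[OF assms(4)] by (auto simp: char_val_def)
    ultimately show ?thesis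
      by simp
  qed
  then show False
    using same_char_int_span assms(1-3) by blast
qed

lemma exp_poly_zero_if_tendsto_zero_along_rays:
  fixes S :: "('a::euclidean_space \<Rightarrow> real) set" and p :: "('a \<Rightarrow> real) \<Rightarrow> 'a \<Rightarrow> complex"
  assumes P: "\<And>a v. a \<in> P \<Longrightarrow> v \<in> P \<Longrightarrow> a + v \<in> P" "v0 \<in> P" "v0 \<noteq> 0"
    and S: "finite S" "\<forall>lam\<in>S. linear lam" "\<forall>lam\<in>S. polynomial_function (p lam)"
    and sep: "\<And>lam lam'. lam \<in> S \<Longrightarrow> lam' \<in> S \<Longrightarrow> lam \<noteq> lam' \<Longrightarrow> \<exists>v\<in>P. char_val lam v \<noteq> char_val lam' v"
    and lim: "\<And>a v. a \<in> P \<Longrightarrow> v \<in> P \<Longrightarrow> v \<noteq> 0 \<Longrightarrow>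
      (\<lambda>n. \<Sum>lam\<in>S. p lam (x + a + of_nat n *\<^sub>R v) * char_val lam (x + a + of_nat n *\<^sub>R v)) \<longlonglongrightarrow> 0"
  shows "\<forall>lam\<in>S. \<forall>a\<in>P. p lam (x + a) = 0"
  using S sep lim
proof (induction S rule: finite_psubset_induct)
  case (psubset S)
  have class_zero: "(\<Sum>lam\<in>{lam\<in>S. char_val lam v = z}. p lam (x + a) * char_val lam (x + a)) = 0"
    if "a \<in> P" "v \<in> P" "v \<noteq> 0" for a v z
    using psubset.hyps psubset.prems(1,2) psubset.prems(4)[OF that]
    by (intro exp_poly_class_sum_zero_if_tendsto_zero_along_ray) auto
  show ?case
  proof (intro ballI)
    fix mu a
    assume "mu \<in> S" "a \<in> P"
    show "p mu (x + a) = 0"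
    proof (cases "\<exists>l1\<in>S. \<exists>l2\<in>S. l1 \<noteq> l2")
      case True
      then obtain l1 l2 v where l12: "l1 \<in> S" "l2 \<in> S" "v \<in> P" "char_val l1 v \<noteq> char_val l2 v"
        using psubset.prems(3) by blast
      then have "v \<noteq> 0"
        using psubset.prems(1) by auto
      \<comment> \<open>v splits S into strictly smaller classes whose sums vanish on x + P.\<close>
      define S' where "S' = {lam\<in>S. char_val lam v = char_val mu v}"
      have "S' \<noteq> S"
      proof
        assume "S' = S"
        then have "l1 \<in> S'" "l2 \<in> S'"
          using l12(1,2) by auto
        then show False
          using l12(4) by (simp add: S'_def)
      qed
      then have "S' \<subset> S"
        by (auto simp: S'_def)
      moreover have "\<forall>lam\<in>S'. linear lam" "\<forall>lam\<in>S'. polynomial_function (p lam)"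
        using psubset.prems(1,2) by (auto simp: S'_def)
      moreover have "\<exists>v\<in>P. char_val lam v \<noteq> char_val lam' v"
        if "lam \<in> S'" "lam' \<in> S'" "lam \<noteq> lam'" for lam lam'
        using psubset.prems(3) that by (auto simp: S'_def)
      moreover have "(\<lambda>n. \<Sum>lam\<in>S'. p lam (x + b + of_nat n *\<^sub>R u) * char_val lam (x + b + of_nat n *\<^sub>R u))
          \<longlonglongrightarrow> 0" if "b \<in> P" "u \<in> P" for b u
        using class_zero[OF add_of_nat_scaleR_mem[OF P(1) that] \<open>v \<in> P\<close> \<open>v \<noteq> 0\<close>]
        by (simp add: S'_def add.assoc)
      ultimately have "\<forall>lam\<in>S'. \<forall>a\<in>P. p lam (x + a) = 0"
        by (rule psubset.IH)
      then show ?thesis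
        using \<open>mu \<in> S\<close> \<open>a \<in> P\<close> by (simp add: S'_def)
    next
      case False
      then have "{lam\<in>S. char_val lam v0 = char_val mu v0} = {mu}"
        using \<open>mu \<in> S\<close> by auto
      then have "p mu (x + a) * char_val mu (x + a) = 0"
        using class_zero[OF \<open>a \<in> P\<close> P(2,3), of "char_val mu v0"] by simp
      then show ?thesis
        by (simp add: char_val_def)
    qed
  qed
qed

theorem mainTheorem2:
  fixes R :: "'a::euclidean_space set"
    and E :: "('a \<Rightarrow> real) set"
    and p :: "('a \<Rightarrow> real) \<Rightarrow> 'a \<Rightarrow> complex"
    and C :: "'a set"
    and Tstar :: 'a
  assumes "lattice R"
    and "finite E"
    and "\<forall>lam\<in>E. linear lam"
    and "\<forall>lam\<in>E. \<forall>lam'\<in>E. same_char R lam lam' \<longrightarrow> lam = lam'"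
    and "\<forall>lam\<in>E. polynomial_function (p lam)"
    and "open C" and "C \<noteq> {}" and "\<forall>x\<in>C. \<forall>t>0. t *\<^sub>R x \<in> C"
    and "Tstar \<in> R"
    and "\<forall>\<epsilon>>0. \<exists>M. \<forall>T \<in> (\<lambda>c. Tstar + c) ` (C \<inter> R). M \<le> norm T \<longrightarrow>
            norm (\<Sum>lam\<in>E. p lam T * char_val lam T) < \<epsilon>"
  shows "\<forall>lam\<in>E. \<forall>x. p lam x = 0"
proof -
  obtain B where B: "independent B" "span B = UNIV" "R = int_span B"
    using assms(1) lattice_iff_int_span by blast
  obtain P w where P: "P \<subseteq> C \<inter> R" "\<And>a v. a \<in> P \<Longrightarrow> v \<in> P \<Longrightarrow> a + v \<in> P"
    and w: "w \<in> P" "\<And>b. b \<in> B \<Longrightarrow> w + b \<in> P"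
    by (rule int_span_semigroup_in_open_cone[OF assms(6-8) finiteI_independent[OF B(1)] B(2)])
      (auto simp: B(3))
  have span_P: "span P = UNIV"
    using B(2) w by (rule span_eq_UNIV_if_translates_mem)
  obtain v0 where "v0 \<in> P" "v0 \<noteq> 0"
    using span_P by (rule exists_nonzero_if_span_eq_UNIV)
  have "\<exists>v\<in>P. char_val lam v \<noteq> char_val lam' v"
    if "lam \<in> E" "lam' \<in> E" "lam \<noteq> lam'" for lam lam'
    using assms(3,4) that B(3) w by (intro exists_char_val_neq_if_not_same_char) auto
  moreover have "(\<lambda>n. \<Sum>lam\<in>E. p lam (Tstar + a + of_nat n *\<^sub>R v) * char_val lam (Tstar + a + of_nat n *\<^sub>R v))
      \<longlonglongrightarrow> 0" if "a \<in> P" "v \<in> P" "v \<noteq> 0" for a v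
  proof -
    have "Tstar + a + of_nat n *\<^sub>R v \<in> (\<lambda>c. Tstar + c) ` (C \<inter> R)" for n
      using add_of_nat_scaleR_mem[OF P(2) that(1,2), of n] P(1) unfolding add.assoc by blast
    then show ?thesis
      using tendsto_zero_along_ray[OF assms(10) \<open>v \<noteq> 0\<close>] by blast
  qed
  ultimately have "\<forall>lam\<in>E. \<forall>a\<in>P. p lam (Tstar + a) = 0"
    by (intro exp_poly_zero_if_tendsto_zero_along_rays[OF P(2) \<open>v0 \<in> P\<close> \<open>v0 \<noteq> 0\<close> assms(2,3,5)])
  then show ?thesis
    using polynomial_function_zero_if_zero_on_translated_semigroup[OF _ P(2) w(1) span_P] assms(5)
    by blast
qed

end
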